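(* Let $(X,\mathcal{B},\mu,T)$ be an ergodic measure-preserving dynamical system, and suppose that $T$ has no eigenvalue of finite order other than $1$ (i.e. if $\lambda\in E_0(T)$ and $\lambda^q=1$ for some integer $q\ge1$, then $\lambda=1$). Let $f\in E_k(T)$ and $g\in E_\ell(T)$ for some integers $k,\ell\ge1$, and suppose $f$ and $g$ are not proportional (there is no constant $c$ with $f=cg$ $\mu$-a.e.). Then $\int_X f\overline{g}\,d\mu=0$.
   Context: $E_0(T)$ is the set of eigenvalues of $T$: the $\lambda\in\mathbb{C}$ for which there exists nonzero $h\in L^2(\mu)$ with $h\circ T=\lambda h$ a.e. (eigenvalues identified with constant functions); for $k\ge1$, $E_k(T)=\{h\in L^2(\mu):|h|=1\text{ a.e.},\ (h\circ T)\overline h\in E_{k-1}(T)\}$. Elements of $\bigcup_{k\ge1}E_k(T)$ are called quasi-eigenfunctions. *)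

theory Defs
  imports "HOL-Probability.Probability"
begin

definition mps :: "'a measure \<Rightarrow> ('a \<Rightarrow> 'a) \<Rightarrow> bool" where
  "mps M T \<longleftrightarrow> prob_space M \<and> T \<in> measurable M M \<and> distr M M T = M"

definition ergodic_mps :: "'a measure \<Rightarrow> ('a \<Rightarrow> 'a) \<Rightarrow> bool" where
  "ergodic_mps M T \<longleftrightarrow> mps M T \<and>
     (\<forall>A \<in> sets M. T -` A \<inter> space M = A \<longrightarrow> measure M A = 0 \<or> measure M A = 1)"

definition L2 :: "'a measure \<Rightarrow> ('a \<Rightarrow> complex) set" where
  "L2 M = {h. h \<in> borel_measurable M \<and> integrable M (\<lambda>x. (cmod (h x))\<^sup>2)}"

definition eigenvalues :: "'a measure \<Rightarrow> ('a \<Rightarrow> 'a) \<Rightarrow> complex set" where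
  "eigenvalues M T = {c. \<exists>h \<in> L2 M. \<not> (AE x in M. h x = 0) \<and>
                          (AE x in M. h (T x) = c * h x)}"

text \<open>E_k(T): E_0 = eigenvalues, identified with (a.e.) constant functions;
  E_(k+1) = unimodular h in L^2 with (h o T) * conj h in E_k.\<close>
fun E :: "'a measure \<Rightarrow> ('a \<Rightarrow> 'a) \<Rightarrow> nat \<Rightarrow> ('a \<Rightarrow> complex) set" where
  "E M T 0 = {h. h \<in> L2 M \<and> (\<exists>c \<in> eigenvalues M T. AE x in M. h x = c)}"
| "E M T (Suc k) = {h. h \<in> L2 M \<and> (AE x in M. cmod (h x) = 1) \<and>
                       (\<lambda>x. h (T x) * cnj (h x)) \<in> E M T k}"

end

theory Submission
  imports Defs
begin

text \<open>
  Quasi-eigenfunctions of all orders, with arbitrary constants at order 0, form classes closed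
  under products and conjugation, so \<open>f \<cdot> conj g\<close> is a quasi-eigenfunction that is not a.e.\
  constant, and it suffices to show that such a function \<open>h\<close> has integral 0. This goes by
  induction on the order. If \<open>h\<close> is an eigenfunction, ergodicity gives the claim. Otherwise no
  cocycle \<open>h \<circ> T\<^sup>n \<cdot> conj h\<close> with \<open>n \<ge> 1\<close> is constant: a constant one would make
  \<open>h \<circ> T \<cdot> conj h\<close> periodic, and without nontrivial roots of unity among the eigenvalues a
  periodic quasi-eigenfunction is constant. By induction the translates \<open>h \<circ> T\<^sup>n\<close> are then
  orthonormal, and Bessel's inequality forces their common inner product \<open>\<integral>h\<close> with 1 to vanish.
\<close>

lemma borel_measurable_cnj [measurable (raw)]:
  "f \<in> borel_measurable M \<Longrightarrow> (\<lambda>x. cnj (f x)) \<in> borel_measurable M"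
  by (rule borel_measurable_continuous_on[OF continuous_on_cnj[OF continuous_on_id]])

lemma mult_cnj_eq_1: "cmod z = 1 \<Longrightarrow> z * cnj z = 1"
  by (metis complex_norm_square of_real_1 power_one)

lemma eq_mult_if_mult_cnj_eq:
  assumes "cmod w = 1" and "z * cnj w = c"
  shows "z = c * w"
proof -
  have "c * w = z * (w * cnj w)"
    using assms(2) by (simp add: algebra_simps)
  then show ?thesis
    using mult_cnj_eq_1[OF assms(1)] by simp
qed

lemma proportional_if_mult_cnj_AE_const:
  assumes unimodular: "AE x in M. cmod (g x) = 1"
    and "AE x in M. f x * cnj (g x) = c"
  shows "AE x in M. f x = c * g x"
  using assms(2) unimodular by eventually_elim (rule eq_mult_if_mult_cnj_eq)

context prob_space
begin

lemma AE_mem_iff_measure_eq_1: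
  assumes "A \<in> sets M" and "measure M A = 0 \<or> measure M A = 1"
  shows "AE x in M. x \<in> A \<longleftrightarrow> measure M A = 1"
proof (cases "measure M A = 1")
  case True
  then show ?thesis
    using AE_prob_1[OF True] by simp
next
  case False
  then have "prob (space M - A) = 1"
    using assms prob_compl by simp
  then have "AE x in M. x \<in> space M - A"
    by (rule AE_prob_1)
  then show ?thesis
    by (rule eventually_mono) (use False in auto)
qed

lemma AE_imp_ex:
  assumes "AE x in M. P x"
  shows "\<exists>x\<in>space M. P x"
proof (rule ccontr)
  assume none: "\<not> ?thesis"
  from assms AE_space have "AE x in M. False"
    by eventually_elim (use none in auto)
  then show False
    by simp
qed

lemma eigenvalue_if_unimodular_eigenfunction:
  assumes [measurable]: "h \<in> borel_measurable M"
    and unimodular: "AE x in M. cmod (h x) = 1"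
    and eigen: "AE x in M. h (T x) = c * h x"
  shows "c \<in> eigenvalues M T"
proof -
  have "integrable M (\<lambda>x. (cmod (h x))\<^sup>2)"
    by (rule integrable_const_bound[where B=1]) (use unimodular in \<open>eventually_elim, simp\<close>, measurable)
  moreover have "\<not> (AE x in M. h x = 0)"
  proof
    assume "AE x in M. h x = 0"
    with unimodular have "AE x in M. False"
      by eventually_elim simp
    then show False
      by simp
  qed
  ultimately show ?thesis
    unfolding eigenvalues_def L2_def using eigen \<open>h \<in> borel_measurable M\<close> by blast
qed

lemma cmod_integral_squared_le:
  fixes S :: "'a \<Rightarrow> complex"
  assumes "integrable M S" and "integrable M (\<lambda>x. (cmod (S x))\<^sup>2)"
  shows "(cmod (integral\<^sup>L M S))\<^sup>2 \<le> integral\<^sup>L M (\<lambda>x. (cmod (S x))\<^sup>2)"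
proof -
  have "(cmod (integral\<^sup>L M S))\<^sup>2 \<le> (integral\<^sup>L M (\<lambda>x. cmod (S x)))\<^sup>2"
    by (intro power_mono integral_norm_bound) simp
  also have "\<dots> \<le> integral\<^sup>L M (\<lambda>x. (cmod (S x))\<^sup>2)"
    using variance_positive[of "\<lambda>x. cmod (S x)"] variance_eq[OF integrable_norm[OF assms(1)] assms(2)]
    by simp
  finally show ?thesis .
qed

lemma integral_cmod_sum_orthonormal_squared:
  fixes v :: "nat \<Rightarrow> 'a \<Rightarrow> complex"
  assumes [measurable]: "\<And>i. v i \<in> borel_measurable M"
    and bounded: "AE x in M. \<forall>i. cmod (v i x) \<le> 1"
    and orthonormal: "\<And>i j. integral\<^sup>L M (\<lambda>x. v i x * cnj (v j x)) = (if i = j then 1 else 0)"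
  shows "integral\<^sup>L M (\<lambda>x. (cmod (\<Sum>i<N. v i x))\<^sup>2) = real N"
proof -
  have int_vv: "integrable M (\<lambda>x. v i x * cnj (v j x))" for i j
    by (rule integrable_const_bound[where B=1])
      (use bounded in \<open>eventually_elim, simp add: norm_mult mult_le_one\<close>, measurable)
  have "complex_of_real (integral\<^sup>L M (\<lambda>x. (cmod (\<Sum>i<N. v i x))\<^sup>2))
      = integral\<^sup>L M (\<lambda>x. complex_of_real ((cmod (\<Sum>i<N. v i x))\<^sup>2))"
    by (rule Bochner_Integration.integral_complex_of_real[symmetric])
  also have "\<dots> = integral\<^sup>L M (\<lambda>x. (\<Sum>i<N. v i x) * cnj (\<Sum>j<N. v j x))"
    by (simp only: complex_norm_square)
  also have "\<dots> = (\<Sum>i<N. \<Sum>j<N. integral\<^sup>L M (\<lambda>x. v i x * cnj (v j x)))"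
    by (simp add: sum_product int_vv)
  also have "\<dots> = of_nat N"
    by (simp add: orthonormal)
  finally show ?thesis
    by (metis of_real_eq_iff of_real_of_nat_eq)
qed

text \<open>Bessel's inequality against the constant function 1: the integral of \<open>\<Sum>i<N. v i\<close>
  is \<open>N * z\<close>, while its \<open>L\<^sup>2\<close> norm is only \<open>sqrt N\<close>.\<close>
lemma integral_eq_0_if_orthonormal:
  fixes v :: "nat \<Rightarrow> 'a \<Rightarrow> complex"
  assumes [measurable]: "\<And>i. v i \<in> borel_measurable M"
    and bounded: "AE x in M. \<forall>i. cmod (v i x) \<le> 1"
    and orthonormal: "\<And>i j. integral\<^sup>L M (\<lambda>x. v i x * cnj (v j x)) = (if i = j then 1 else 0)"
    and same_integral: "\<And>i. integral\<^sup>L M (v i) = z"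
  shows "z = 0"
proof (rule ccontr)
  assume "z \<noteq> 0"
  then obtain N :: nat where "1 / (cmod z)\<^sup>2 < real N"
    using reals_Archimedean2 by blast
  then have N: "1 < real N * (cmod z)\<^sup>2"
    using \<open>z \<noteq> 0\<close> by (simp add: divide_less_eq)
  define S where "S x = (\<Sum>i<N. v i x)" for x
  have [measurable]: "S \<in> borel_measurable M"
    unfolding S_def by measurable
  have S_bound: "AE x in M. cmod (S x) \<le> real N"
    using bounded
  proof eventually_elim
    case (elim x)
    have "cmod (S x) \<le> (\<Sum>i<N. cmod (v i x))"
      unfolding S_def by (rule norm_sum)
    also have "\<dots> \<le> (\<Sum>i<N. 1)"
      by (rule sum_mono) (use elim in blast)
    finally show ?case
      by simp
  qed
  have int_v: "integrable M (v i)" for i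
    by (rule integrable_const_bound[where B=1]) (use bounded in \<open>eventually_elim, simp\<close>, measurable)
  have int_S: "integrable M S"
    by (rule integrable_const_bound[where B="real N"]) (use S_bound in auto)
  have int_S2: "integrable M (\<lambda>x. (cmod (S x))\<^sup>2)"
    by (rule integrable_const_bound[where B="real N ^ 2"])
      (use S_bound in \<open>eventually_elim, simp add: power_mono\<close>, measurable)
  have "integral\<^sup>L M S = of_nat N * z"
    unfolding S_def by (simp add: int_v same_integral)
  moreover have "integral\<^sup>L M (\<lambda>x. (cmod (S x))\<^sup>2) = real N"
    unfolding S_def by (rule integral_cmod_sum_orthonormal_squared[OF assms(1) bounded orthonormal])
  ultimately have "(real N * cmod z)\<^sup>2 \<le> real N"
    using cmod_integral_squared_le[OF int_S int_S2] by (simp add: norm_mult)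
  then have "real N * (real N * (cmod z)\<^sup>2) \<le> real N * 1"
    by (simp add: power2_eq_square ac_simps)
  moreover have "real N > 0"
    using N by (cases N) auto
  ultimately show False
    using N by simp
qed

end

lemma eq_if_same_rational_upper_bounds:
  fixes a b :: real
  assumes "\<forall>q. a \<le> real_of_rat q \<longleftrightarrow> b \<le> real_of_rat q"
  shows "a = b"
proof -
  have "x \<le> y" if "\<forall>q. x \<le> real_of_rat q \<longleftrightarrow> y \<le> real_of_rat q" for x y :: real
  proof (rule ccontr)
    assume "\<not> x \<le> y"
    then obtain q where "y < real_of_rat q" and "real_of_rat q < x"
      using of_rat_dense by (meson not_le)
    then show False
      using that[rule_format, of q] by linarith
  qed
  then show ?thesis
    using assms by (metis order_antisym)
qed

locale mp_system = prob_space M for M :: "'a measure" +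
  fixes T :: "'a \<Rightarrow> 'a"
  assumes measurable_T [measurable]: "T \<in> measurable M M"
    and distr_T: "distr M M T = M"
begin

lemma measurable_funpow [measurable]: "T ^^ n \<in> measurable M M"
  by (rule measurable_compose_n[OF measurable_T])

lemma distr_funpow: "distr M M (T ^^ n) = M"
proof (induction n)
  case 0
  then show ?case
    using distr_id by (simp add: id_def)
next
  case (Suc n)
  have "distr M M (T ^^ Suc n) = distr (distr M M (T ^^ n)) M T"
    by (simp add: distr_distr comp_def)
  also have "\<dots> = M"
    using Suc distr_T by simp
  finally show ?case .
qed

lemma AE_comp_funpow: "AE x in M. P x \<Longrightarrow> AE x in M. P ((T ^^ n) x)"
  by (rule AE_distrD[OF measurable_funpow]) (simp only: distr_funpow)

lemma AE_comp_T: "AE x in M. P x \<Longrightarrow> AE x in M. P (T x)"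
  using AE_comp_funpow[of P 1] by simp

lemma integral_comp_funpow:
  fixes f :: "'a \<Rightarrow> 'b::{banach, second_countable_topology}"
  assumes "f \<in> borel_measurable M"
  shows "integral\<^sup>L M (\<lambda>x. f ((T ^^ n) x)) = integral\<^sup>L M f"
  using integral_distr[OF measurable_funpow assms] by (simp add: distr_funpow)

lemma integral_comp_T:
  fixes f :: "'a \<Rightarrow> 'b::{banach, second_countable_topology}"
  assumes "f \<in> borel_measurable M"
  shows "integral\<^sup>L M (\<lambda>x. f (T x)) = integral\<^sup>L M f"
  using integral_comp_funpow[OF assms, of 1] by simp

lemma integral_translates_mult_cnj:
  fixes h :: "'a \<Rightarrow> complex"
  assumes [measurable]: "h \<in> borel_measurable M"
    and unimodular: "AE x in M. cmod (h x) = 1"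
    and orthogonal: "\<And>n. n \<ge> 1 \<Longrightarrow> integral\<^sup>L M (\<lambda>x. h ((T ^^ n) x) * cnj (h x)) = 0"
  shows "integral\<^sup>L M (\<lambda>x. h ((T ^^ a) x) * cnj (h ((T ^^ b) x))) = (if a = b then 1 else 0)"
proof -
  have shift: "integral\<^sup>L M (\<lambda>x. h ((T ^^ (d + c)) x) * cnj (h ((T ^^ c) x)))
      = integral\<^sup>L M (\<lambda>x. h ((T ^^ d) x) * cnj (h x))" for c d
    using integral_comp_funpow[of "\<lambda>x. h ((T ^^ d) x) * cnj (h x)" c] by (simp add: funpow_add)
  show ?thesis
  proof (cases a b rule: linorder_cases)
    case less
    have "integral\<^sup>L M (\<lambda>x. h ((T ^^ a) x) * cnj (h ((T ^^ b) x)))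
        = cnj (integral\<^sup>L M (\<lambda>x. h ((T ^^ b) x) * cnj (h ((T ^^ a) x))))"
      by (simp add: Bochner_Integration.integral_cnj[symmetric] mult.commute)
    also have "\<dots> = 0"
      using shift[of "b - a" a] orthogonal[of "b - a"] less by simp
    finally show ?thesis
      using less by simp
  next
    case equal
    have "AE x in M. h ((T ^^ a) x) * cnj (h ((T ^^ a) x)) = 1"
      using AE_comp_funpow[OF unimodular, of a] by eventually_elim (simp add: mult_cnj_eq_1)
    then have "integral\<^sup>L M (\<lambda>x. h ((T ^^ a) x) * cnj (h ((T ^^ a) x))) = integral\<^sup>L M (\<lambda>x. 1)"
      by (intro integral_cong_AE) auto
    then show ?thesis
      using equal prob_space by simp
  next
    case greater
    then show ?thesis
      using shift[of "a - b" b] orthogonal[of "a - b"] by simp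
  qed
qed

lemma integral_eq_0_if_translates_orthogonal:
  fixes h :: "'a \<Rightarrow> complex"
  assumes [measurable]: "h \<in> borel_measurable M"
    and unimodular: "AE x in M. cmod (h x) = 1"
    and orthogonal: "\<And>n. n \<ge> 1 \<Longrightarrow> integral\<^sup>L M (\<lambda>x. h ((T ^^ n) x) * cnj (h x)) = 0"
  shows "integral\<^sup>L M h = 0"
proof (rule integral_eq_0_if_orthonormal[of "\<lambda>a x. h ((T ^^ a) x)"])
  show "AE x in M. \<forall>a. cmod (h ((T ^^ a) x)) \<le> 1"
    unfolding AE_all_countable
  proof
    fix a
    show "AE x in M. cmod (h ((T ^^ a) x)) \<le> 1"
      using AE_comp_funpow[OF unimodular, of a] by eventually_elim simp
  qed
  show "integral\<^sup>L M (\<lambda>x. h ((T ^^ a) x)) = integral\<^sup>L M h" for a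
    by (rule integral_comp_funpow) measurable
qed (use integral_translates_mult_cnj[OF assms] in auto)

end

text \<open>A relaxation of \<open>E M T\<close>: level 0 admits every a.e.\ constant, not only eigenvalues, and
  square integrability is weakened to measurability. This makes every level closed under
  products and conjugation.\<close>
fun quasi_eigenfunctions :: "'a measure \<Rightarrow> ('a \<Rightarrow> 'a) \<Rightarrow> nat \<Rightarrow> ('a \<Rightarrow> complex) set" where
  "quasi_eigenfunctions M T 0 = {h. h \<in> borel_measurable M \<and> (\<exists>c. AE x in M. h x = c)}"
| "quasi_eigenfunctions M T (Suc m) =
     {h. h \<in> borel_measurable M \<and> (AE x in M. cmod (h x) = 1) \<and>
         (\<lambda>x. h (T x) * cnj (h x)) \<in> quasi_eigenfunctions M T m}"

lemma E_subset_quasi_eigenfunctions: "E M T m \<subseteq> quasi_eigenfunctions M T m"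
  by (induction m) (auto simp: L2_def)

lemma one_in_quasi_eigenfunctions: "(\<lambda>x. 1) \<in> quasi_eigenfunctions M T m"
  by (induction m) auto

context mp_system
begin

lemma quasi_eigenfunctions_AE_cong:
  assumes "h \<in> quasi_eigenfunctions M T m" and "AE x in M. g x = h x"
    and "g \<in> borel_measurable M"
  shows "g \<in> quasi_eigenfunctions M T m"
  using assms
proof (induction m arbitrary: h g)
  case 0
  then obtain c where "AE x in M. h x = c"
    by auto
  with 0(2) have "AE x in M. g x = c"
    by eventually_elim simp
  with 0 show ?case
    by auto
next
  case (Suc m)
  then have "AE x in M. cmod (g x) = 1"
    by auto
  moreover have "(\<lambda>x. g (T x) * cnj (g x)) \<in> quasi_eigenfunctions M T m"
  proof (rule Suc.IH)
    show "(\<lambda>x. h (T x) * cnj (h x)) \<in> quasi_eigenfunctions M T m"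
      using Suc.prems by simp
    show "(\<lambda>x. g (T x) * cnj (g x)) \<in> borel_measurable M"
      using Suc.prems(3) by measurable
    show "AE x in M. g (T x) * cnj (g x) = h (T x) * cnj (h x)"
      using AE_comp_T[OF Suc.prems(2)] Suc.prems(2) by eventually_elim simp
  qed
  ultimately show ?case
    using Suc.prems(3) by simp
qed

lemma quasi_eigenfunctions_comp_T:
  "h \<in> quasi_eigenfunctions M T m \<Longrightarrow> (\<lambda>x. h (T x)) \<in> quasi_eigenfunctions M T m"
proof (induction m arbitrary: h)
  case 0
  then obtain c where "AE x in M. h x = c" and [measurable]: "h \<in> borel_measurable M"
    by auto
  then show ?case
    using AE_comp_T by auto
next
  case (Suc m)
  then have [measurable]: "h \<in> borel_measurable M" and unimodular: "AE x in M. cmod (h x) = 1"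
    and "(\<lambda>x. h (T x) * cnj (h x)) \<in> quasi_eigenfunctions M T m"
    by auto
  then show ?case
    using AE_comp_T[OF unimodular] Suc.IH[of "\<lambda>x. h (T x) * cnj (h x)"] by simp
qed

lemma quasi_eigenfunctions_mult:
  "h \<in> quasi_eigenfunctions M T m \<Longrightarrow> g \<in> quasi_eigenfunctions M T m \<Longrightarrow>
    (\<lambda>x. h x * g x) \<in> quasi_eigenfunctions M T m"
proof (induction m arbitrary: h g)
  case 0
  then obtain c d where "AE x in M. h x = c" "AE x in M. g x = d"
    by auto
  then have "AE x in M. h x * g x = c * d"
    by eventually_elim simp
  with 0 show ?case
    by auto
next
  case (Suc m)
  have [measurable]: "h \<in> borel_measurable M" "g \<in> borel_measurable M"
    using Suc.prems by auto
  have "(\<lambda>x. h (T x) * g (T x) * cnj (h x * g x)) =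
      (\<lambda>x. (h (T x) * cnj (h x)) * (g (T x) * cnj (g x)))"
    by (auto simp: fun_eq_iff)
  moreover have "AE x in M. cmod (h x * g x) = 1"
    using Suc.prems by (auto simp: norm_mult)
  ultimately show ?case
    using Suc by simp
qed

lemma quasi_eigenfunctions_cnj:
  "h \<in> quasi_eigenfunctions M T m \<Longrightarrow> (\<lambda>x. cnj (h x)) \<in> quasi_eigenfunctions M T m"
proof (induction m arbitrary: h)
  case 0
  then obtain c where "AE x in M. h x = c"
    by auto
  then have "AE x in M. cnj (h x) = cnj c"
    by eventually_elim simp
  with 0 show ?case
    by auto
next
  case (Suc m)
  have [measurable]: "h \<in> borel_measurable M"
    using Suc.prems by auto
  have "(\<lambda>x. cnj (h (T x) * cnj (h x))) \<in> quasi_eigenfunctions M T m"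
    using Suc.prems by (intro Suc.IH) simp
  then show ?case
    using Suc.prems by simp
qed

lemma quasi_eigenfunctions_Suc_mono:
  "h \<in> quasi_eigenfunctions M T (Suc m) \<Longrightarrow> h \<in> quasi_eigenfunctions M T (Suc (Suc m))"
proof (induction m arbitrary: h)
  case 0
  then have [measurable]: "h \<in> borel_measurable M" and unimodular: "AE x in M. cmod (h x) = 1"
    and "\<exists>c. AE x in M. h (T x) * cnj (h x) = c"
    by auto
  then obtain c where c: "AE x in M. h (T x) * cnj (h x) = c"
    by blast
  have "AE x in M. cmod (h (T x) * cnj (h x)) = 1"
    using unimodular AE_comp_T[OF unimodular] by eventually_elim (simp add: norm_mult)
  moreover have "AE x in M. h (T (T x)) * cnj (h (T x)) * cnj (h (T x) * cnj (h x)) = c * cnj c"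
    using c AE_comp_T[OF c] by eventually_elim simp
  ultimately show ?case
    using unimodular by auto
next
  case (Suc m)
  have "h \<in> borel_measurable M" "AE x in M. cmod (h x) = 1"
    and "(\<lambda>x. h (T x) * cnj (h x)) \<in> quasi_eigenfunctions M T (Suc m)"
    using Suc.prems by (simp_all only: quasi_eigenfunctions.simps mem_Collect_eq)
  moreover from this(3) have "(\<lambda>x. h (T x) * cnj (h x)) \<in> quasi_eigenfunctions M T (Suc (Suc m))"
    by (rule Suc.IH)
  ultimately show ?case
    by (simp only: quasi_eigenfunctions.simps(2)[of M T "Suc (Suc m)"] mem_Collect_eq)
qed

lemma quasi_eigenfunctions_mono:
  assumes "1 \<le> m" and "m \<le> n" and "h \<in> quasi_eigenfunctions M T m"
  shows "h \<in> quasi_eigenfunctions M T n"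
  using assms(2)
proof (induction n rule: dec_induct)
  case base
  then show ?case
    using assms(3) .
next
  case (step i)
  then obtain i' where "i = Suc i'"
    using assms(1) by (cases i) auto
  with step.IH show ?case
    using quasi_eigenfunctions_Suc_mono by blast
qed

lemma quasi_eigenfunctions_cocycle:
  assumes h: "h \<in> quasi_eigenfunctions M T (Suc m)"
  shows "(\<lambda>x. h ((T ^^ n) x) * cnj (h x)) \<in> quasi_eigenfunctions M T m"
proof (induction n)
  case 0
  have "AE x in M. h x * cnj (h x) = 1"
    using h by (auto simp: mult_cnj_eq_1)
  then show ?case
    using h by (auto intro: quasi_eigenfunctions_AE_cong[OF one_in_quasi_eigenfunctions])
next
  case (Suc n)
  have [measurable]: "h \<in> borel_measurable M" and unimodular: "AE x in M. cmod (h x) = 1"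
    using h by auto
  have "(\<lambda>x. h ((T ^^ n) (T x)) * cnj (h (T x)) * (h (T x) * cnj (h x))) \<in> quasi_eigenfunctions M T m"
    using quasi_eigenfunctions_mult[OF quasi_eigenfunctions_comp_T[OF Suc.IH]] h by simp
  moreover have "AE x in M. h ((T ^^ Suc n) x) * cnj (h x) =
      h ((T ^^ n) (T x)) * cnj (h (T x)) * (h (T x) * cnj (h x))"
    using AE_comp_T[OF unimodular]
  proof eventually_elim
    case (elim x)
    have "cnj (h (T x)) * h (T x) = 1"
      using mult_cnj_eq_1[OF elim] by (simp add: mult.commute)
    then show ?case
      by (simp add: funpow_swap1 algebra_simps)
  qed
  ultimately show ?case
    by (rule quasi_eigenfunctions_AE_cong) measurable
qed

end

locale ergodic_system = mp_system +
  assumes ergodic: "\<And>A. A \<in> sets M \<Longrightarrow> T -` A \<inter> space M = A \<Longrightarrow> measure M A = 0 \<or> measure M A = 1"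
begin

text \<open>An invariant set mod 0 agrees a.e.\ with the strictly invariant set of points whose orbit
  eventually stays in it.\<close>
lemma measure_0_or_1_if_AE_invariant:
  assumes [measurable]: "A \<in> sets M" and invariant: "AE x in M. T x \<in> A \<longleftrightarrow> x \<in> A"
  shows "measure M A = 0 \<or> measure M A = 1"
proof -
  define B where "B = {x \<in> space M. \<forall>\<^sub>F n in sequentially. (T ^^ n) x \<in> A}"
  have [measurable]: "B \<in> sets M"
    unfolding B_def eventually_sequentially by measurable
  have "(\<forall>\<^sub>F n in sequentially. (T ^^ n) (T x) \<in> A) \<longleftrightarrow> (\<forall>\<^sub>F n in sequentially. (T ^^ n) x \<in> A)"
    for x
    using eventually_sequentially_Suc[of "\<lambda>n. (T ^^ n) x \<in> A"] by (simp add: funpow_swap1)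
  then have "T -` B \<inter> space M = B"
    using measurable_space[OF measurable_T] by (auto simp: B_def)
  then have "measure M B = 0 \<or> measure M B = 1"
    using ergodic by simp
  moreover have "AE x in M. \<forall>n. (T ^^ n) x \<in> A \<longleftrightarrow> x \<in> A"
    unfolding AE_all_countable
  proof
    fix n
    show "AE x in M. (T ^^ n) x \<in> A \<longleftrightarrow> x \<in> A"
    proof (induction n)
      case (Suc n)
      from AE_comp_T[OF Suc] invariant show ?case
        by eventually_elim (simp add: funpow_swap1)
    qed simp
  qed
  then have "measure M B = measure M A"
    by (intro measure_eq_AE) (auto simp: B_def)
  ultimately show ?thesis
    by simp
qed

lemma AE_const_if_invariant_real:
  fixes \<phi> :: "'a \<Rightarrow> real"
  assumes [measurable]: "\<phi> \<in> borel_measurable M" and invariant: "AE x in M. \<phi> (T x) = \<phi> x"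
  shows "\<exists>c. AE x in M. \<phi> x = c"
proof -
  define A where "A q = {x \<in> space M. \<phi> x \<le> real_of_rat q}" for q
  have [measurable]: "A q \<in> sets M" for q
    unfolding A_def by measurable
  have "AE x in M. T x \<in> A q \<longleftrightarrow> x \<in> A q" for q
    using invariant AE_space by eventually_elim (auto simp: A_def measurable_space[OF measurable_T])
  then have "measure M (A q) = 0 \<or> measure M (A q) = 1" for q
    by (intro measure_0_or_1_if_AE_invariant) simp_all
  then have "AE x in M. x \<in> A q \<longleftrightarrow> measure M (A q) = 1" for q
    by (simp add: AE_mem_iff_measure_eq_1)
  then have levels: "AE x in M. \<forall>q. x \<in> A q \<longleftrightarrow> measure M (A q) = 1"
    by (simp add: AE_all_countable)
  obtain x\<^sub>0 where "x\<^sub>0 \<in> space M" and x\<^sub>0: "\<forall>q. x\<^sub>0 \<in> A q \<longleftrightarrow> measure M (A q) = 1"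
    using AE_imp_ex[OF levels] by blast
  have "AE x in M. \<phi> x = \<phi> x\<^sub>0"
    using levels AE_space
  proof eventually_elim
    case (elim x)
    then have "\<forall>q. \<phi> x \<le> real_of_rat q \<longleftrightarrow> \<phi> x\<^sub>0 \<le> real_of_rat q"
      using x\<^sub>0 \<open>x\<^sub>0 \<in> space M\<close> by (simp add: A_def)
    then show ?case
      by (rule eq_if_same_rational_upper_bounds)
  qed
  then show ?thesis
    by blast
qed

lemma AE_const_if_invariant:
  fixes \<phi> :: "'a \<Rightarrow> complex"
  assumes [measurable]: "\<phi> \<in> borel_measurable M" and invariant: "AE x in M. \<phi> (T x) = \<phi> x"
  shows "\<exists>c. AE x in M. \<phi> x = c"
proof -
  have "AE x in M. Re (\<phi> (T x)) = Re (\<phi> x)" "AE x in M. Im (\<phi> (T x)) = Im (\<phi> x)"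
    using invariant by auto
  then obtain a b where "AE x in M. Re (\<phi> x) = a" "AE x in M. Im (\<phi> x) = b"
    using AE_const_if_invariant_real[of "\<lambda>x. Re (\<phi> x)"] AE_const_if_invariant_real[of "\<lambda>x. Im (\<phi> x)"]
    by auto
  then have "AE x in M. \<phi> x = Complex a b"
    by eventually_elim (simp add: complex_eq_iff)
  then show ?thesis
    by blast
qed

lemma integral_eq_0_if_nonconst_eigenfunction:
  fixes h :: "'a \<Rightarrow> complex"
  assumes [measurable]: "h \<in> borel_measurable M"
    and eigen: "AE x in M. h (T x) = c * h x" and nonconst: "\<not> (\<exists>c. AE x in M. h x = c)"
  shows "integral\<^sup>L M h = 0"
proof (cases "c = 1")
  case True
  then show ?thesis
    using AE_const_if_invariant eigen nonconst by simp
next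
  case False
  have "integral\<^sup>L M h = integral\<^sup>L M (\<lambda>x. h (T x))"
    by (simp add: integral_comp_T)
  also have "\<dots> = integral\<^sup>L M (\<lambda>x. c * h x)"
    using eigen by (intro integral_cong_AE) auto
  finally have "(1 - c) * integral\<^sup>L M h = 0"
    by (simp add: algebra_simps)
  with False show ?thesis
    by simp
qed

end

text \<open>For an ergodic system, the absence of eigenvalues that are nontrivial roots of unity is
  equivalent to the ergodicity of every power \<open>T\<^sup>n\<close>.\<close>
locale totally_ergodic_system = ergodic_system +
  assumes eigenvalue_root_of_unity_eq_1:
    "\<And>c q. c \<in> eigenvalues M T \<Longrightarrow> q \<ge> 1 \<Longrightarrow> c ^ q = 1 \<Longrightarrow> c = 1"
begin

lemma quasi_eigenfunction_AE_const_if_periodic: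
  assumes "h \<in> quasi_eigenfunctions M T m" and "n \<ge> 1"
    and "AE x in M. h ((T ^^ n) x) = h x"
  shows "\<exists>c. AE x in M. h x = c"
  using assms
proof (induction m arbitrary: h)
  case 0
  then show ?case
    by auto
next
  case (Suc m)
  have [measurable]: "h \<in> borel_measurable M" and unimodular: "AE x in M. cmod (h x) = 1"
    and cocycle: "(\<lambda>x. h (T x) * cnj (h x)) \<in> quasi_eigenfunctions M T m"
    using Suc.prems(1) by auto
  have "AE x in M. h (T ((T ^^ n) x)) * cnj (h ((T ^^ n) x)) = h (T x) * cnj (h x)"
    using AE_comp_T[OF Suc.prems(3)] Suc.prems(3) by eventually_elim (simp add: funpow_swap1)
  then obtain c where "AE x in M. h (T x) * cnj (h x) = c"
    using Suc.IH[OF cocycle \<open>n \<ge> 1\<close>] by auto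
  then have eigen: "AE x in M. h (T x) = c * h x"
    by (rule proportional_if_mult_cnj_AE_const[OF unimodular])
  have "AE x in M. h ((T ^^ k) x) = c ^ k * h x" for k
  proof (induction k)
    case (Suc k)
    from AE_comp_funpow[OF eigen, of k] Suc show ?case
      by eventually_elim simp
  qed simp
  from this[of n] Suc.prems(3) unimodular have "AE x in M. c ^ n = 1"
    by eventually_elim (metis mult_cancel_right mult_1 norm_zero zero_neq_one)
  then have "c ^ n = 1"
    using AE_imp_ex by blast
  moreover have "c \<in> eigenvalues M T"
    by (rule eigenvalue_if_unimodular_eigenfunction[OF _ unimodular eigen]) measurable
  ultimately have "c = 1"
    using eigenvalue_root_of_unity_eq_1 \<open>n \<ge> 1\<close> by blast
  then show ?case
    using AE_const_if_invariant eigen by simp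
qed

lemma eigenfunction_if_cocycle_AE_const:
  assumes h: "h \<in> quasi_eigenfunctions M T (Suc m)" and "n \<ge> 1"
    and "AE x in M. h ((T ^^ n) x) * cnj (h x) = c"
  shows "\<exists>c. AE x in M. h (T x) = c * h x"
proof -
  have [measurable]: "h \<in> borel_measurable M" and unimodular: "AE x in M. cmod (h x) = 1"
    and cocycle: "(\<lambda>x. h (T x) * cnj (h x)) \<in> quasi_eigenfunctions M T m"
    using h by auto
  have shift: "AE x in M. h ((T ^^ n) x) = c * h x"
    by (rule proportional_if_mult_cnj_AE_const[OF unimodular assms(3)])
  from shift unimodular AE_comp_funpow[OF unimodular, of n] have "AE x in M. cmod c = 1"
    by eventually_elim (simp add: norm_mult)
  then have "c * cnj c = 1"
    using AE_imp_ex mult_cnj_eq_1 by blast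
  have "AE x in M. h (T ((T ^^ n) x)) * cnj (h ((T ^^ n) x)) = h (T x) * cnj (h x)"
    using AE_comp_T[OF shift] shift
  proof eventually_elim
    case (elim x)
    then have "h (T ((T ^^ n) x)) * cnj (h ((T ^^ n) x)) = (c * cnj c) * (h (T x) * cnj (h x))"
      by (simp add: funpow_swap1 ac_simps)
    then show ?case
      using \<open>c * cnj c = 1\<close> by simp
  qed
  then obtain c' where "AE x in M. h (T x) * cnj (h x) = c'"
    using quasi_eigenfunction_AE_const_if_periodic[OF cocycle \<open>n \<ge> 1\<close>] by auto
  then have "AE x in M. h (T x) = c' * h x"
    by (rule proportional_if_mult_cnj_AE_const[OF unimodular])
  then show ?thesis
    by blast
qed

lemma integral_quasi_eigenfunction_eq_0:
  assumes "h \<in> quasi_eigenfunctions M T m" and "\<not> (\<exists>c. AE x in M. h x = c)"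
  shows "integral\<^sup>L M h = 0"
  using assms
proof (induction m arbitrary: h)
  case 0
  then show ?case
    by auto
next
  case (Suc m)
  have [measurable]: "h \<in> borel_measurable M" and unimodular: "AE x in M. cmod (h x) = 1"
    using Suc.prems(1) by auto
  show ?case
  proof (cases "\<exists>c. AE x in M. h (T x) = c * h x")
    case True
    then show ?thesis
      using integral_eq_0_if_nonconst_eigenfunction Suc.prems(2) by auto
  next
    case False
    then have "integral\<^sup>L M (\<lambda>x. h ((T ^^ n) x) * cnj (h x)) = 0" if "n \<ge> 1" for n
      using Suc.IH[OF quasi_eigenfunctions_cocycle[OF Suc.prems(1)]]
        eigenfunction_if_cocycle_AE_const[OF Suc.prems(1) that] by blast
    then show ?thesis
      using integral_eq_0_if_translates_orthogonal unimodular by simp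
  qed
qed

end

lemma totally_ergodic_systemI:
  assumes "ergodic_mps M T"
    and "\<And>c q. c \<in> eigenvalues M T \<Longrightarrow> q \<ge> 1 \<Longrightarrow> c ^ q = 1 \<Longrightarrow> c = 1"
  shows "totally_ergodic_system M T"
proof -
  have "prob_space M" "T \<in> measurable M M" "distr M M T = M"
    and "\<And>A. A \<in> sets M \<Longrightarrow> T -` A \<inter> space M = A \<Longrightarrow> measure M A = 0 \<or> measure M A = 1"
    using assms(1) unfolding ergodic_mps_def mps_def by auto
  then show ?thesis
    using assms(2) by (intro totally_ergodic_system.intro ergodic_system.intro
      mp_system.intro totally_ergodic_system_axioms.intro ergodic_system_axioms.intro
      mp_system_axioms.intro)
qed

theorem proposition2p1:
  fixes M :: "'a measure" and T :: "'a \<Rightarrow> 'a"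
    and f g :: "'a \<Rightarrow> complex" and k l :: nat
  assumes erg: "ergodic_mps M T"
    and no_finite_order: "\<And>c q. c \<in> eigenvalues M T \<Longrightarrow> q \<ge> 1 \<Longrightarrow> c ^ q = 1 \<Longrightarrow> c = 1"
    and k: "k \<ge> 1" and l: "l \<ge> 1"
    and f: "f \<in> E M T k" and g: "g \<in> E M T l"
    and not_prop: "\<not> (\<exists>c::complex. AE x in M. f x = c * g x)"
  shows "(LINT x|M. f x * cnj (g x)) = 0"
proof -
  interpret totally_ergodic_system M T
    using erg no_finite_order by (rule totally_ergodic_systemI)
  have "f \<in> quasi_eigenfunctions M T (max k l)" "g \<in> quasi_eigenfunctions M T (max k l)"
    using quasi_eigenfunctions_mono[OF k _ E_subset_quasi_eigenfunctions[THEN subsetD, OF f]]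
      quasi_eigenfunctions_mono[OF l _ E_subset_quasi_eigenfunctions[THEN subsetD, OF g]]
    by simp_all
  then have product: "(\<lambda>x. f x * cnj (g x)) \<in> quasi_eigenfunctions M T (max k l)"
    by (intro quasi_eigenfunctions_mult quasi_eigenfunctions_cnj)
  obtain l' where "l = Suc l'"
    using l by (cases l) auto
  with g have unimodular: "AE x in M. cmod (g x) = 1"
    by simp
  have "\<not> (\<exists>c. AE x in M. f x * cnj (g x) = c)"
    using proportional_if_mult_cnj_AE_const[OF unimodular] not_prop by blast
  then show ?thesis
    by (rule integral_quasi_eigenfunction_eq_0[OF product])
qed

end
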